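(* Let $1\le q\le p\le\infty$, $E$ a Banach space, $Y$ a Banach lattice and $T:E\to Y$ a bounded linear operator. Then $T$ is positive $(p,q)$-majorizing if and only if $T$ is positive strongly $(p,q)$-summing.
   Context: $p^{\ast},q^{\ast}$ denote conjugate exponents. For a finite family $(y_i^{\ast})$ in $Y^{\ast}$, $\|(y_i^{\ast})\|_{p^{\ast},\omega}=\sup_{y\in B_{Y}}\|(\langle y_i^{\ast},y\rangle)_i\|_{p^{\ast}}$. $T$ is positive $(p,q)$-majorizing if there is $C>0$ such that $(\sum_{i=1}^n|\langle T(z_i),y_i^{\ast}\rangle|^{q^{\ast}})^{1/q^{\ast}}\le C\|(y_i^{\ast})_{i=1}^n\|_{p^{\ast},\omega}$ for all $n$, all $z_1,\dots,z_n\in B_E$ and all positive $y_1^{\ast},\dots,y_n^{\ast}\in Y^{\ast}$. $T$ is positive strongly $(p,q)$-summing if there is $C>0$ with $\sum_{i=1}^n|\langle T(x_i),y_i^{\ast}\rangle|\le C(\sum_i\|x_i\|^q)^{1/q}\|(y_i^{\ast})_{i=1}^n\|_{p^{\ast},\omega}$ for all $n$, all $x_i\in E$ and all positive $y_i^{\ast}\in Y^{\ast}$. *)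

theory Defs
  imports "HOL-Analysis.Analysis"
begin

class banach_lattice = banach + ordered_real_vector + lattice +
  assumes lattice_norm_mono: "sup x (- x) \<le> sup y (- y) \<Longrightarrow> norm x \<le> norm y"

definition conj_exp :: "ereal \<Rightarrow> ereal" where
  "conj_exp p = (if p = 1 then \<infinity> else if p = \<infinity> then 1
                 else ereal (real_of_ereal p / (real_of_ereal p - 1)))"

definition seq_norm :: "ereal \<Rightarrow> nat \<Rightarrow> (nat \<Rightarrow> real) \<Rightarrow> real" where
  "seq_norm r n a = (if r = \<infinity> then Max (insert 0 ((\<lambda>i. \<bar>a i\<bar>) ` {..<n}))
                     else (\<Sum>i<n. \<bar>a i\<bar> powr real_of_ereal r) powr (1 / real_of_ereal r))"

definition weak_norm :: "ereal \<Rightarrow> nat \<Rightarrow> (nat \<Rightarrow> ('b::real_normed_vector \<Rightarrow>\<^sub>L real)) \<Rightarrow> real" where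
  "weak_norm p n ys = (SUP y\<in>{y::'b. norm y \<le> 1}. seq_norm (conj_exp p) n (\<lambda>i. blinfun_apply (ys i) y))"

definition positive_functional :: "('b::{real_normed_vector, order, zero} \<Rightarrow>\<^sub>L real) \<Rightarrow> bool" where
  "positive_functional f = (\<forall>y. 0 \<le> y \<longrightarrow> 0 \<le> blinfun_apply f y)"

definition pos_majorizing :: "ereal \<Rightarrow> ereal \<Rightarrow> ('a::real_normed_vector \<Rightarrow> 'b::banach_lattice) \<Rightarrow> bool" where
  "pos_majorizing p q T = (\<exists>C>0. \<forall>n (z::nat \<Rightarrow> 'a) (ys::nat \<Rightarrow> ('b \<Rightarrow>\<^sub>L real)).
      (\<forall>i<n. norm (z i) \<le> 1) \<longrightarrow> (\<forall>i<n. positive_functional (ys i)) \<longrightarrow>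
      seq_norm (conj_exp q) n (\<lambda>i. blinfun_apply (ys i) (T (z i))) \<le> C * weak_norm p n ys)"

definition pos_strongly_summing :: "ereal \<Rightarrow> ereal \<Rightarrow> ('a::real_normed_vector \<Rightarrow> 'b::banach_lattice) \<Rightarrow> bool" where
  "pos_strongly_summing p q T = (\<exists>C>0. \<forall>n (x::nat \<Rightarrow> 'a) (ys::nat \<Rightarrow> ('b \<Rightarrow>\<^sub>L real)).
      (\<forall>i<n. positive_functional (ys i)) \<longrightarrow>
      (\<Sum>i<n. \<bar>blinfun_apply (ys i) (T (x i))\<bar>)
        \<le> C * seq_norm q n (\<lambda>i. norm (x i)) * weak_norm p n ys)"

end

theory Submission
  imports Defs
begin

text \<open>Both inequalities are the two halves of the duality between \<open>\<ell>\<^sub>q\<close> and \<open>\<ell>\<^sub>q\<^sub>*\<close>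
on finite sequences. Writing \<open>x\<^sub>i = \<parallel>x\<^sub>i\<parallel> z\<^sub>i\<close> with \<open>\<parallel>z\<^sub>i\<parallel> \<le> 1\<close>, Hoelder's inequality turns
the majorizing estimate into the strongly summing one. Conversely, choose \<open>\<lambda> \<ge> 0\<close> in the
unit ball of \<open>\<ell>\<^sub>q\<close> norming the sequence \<open>\<langle>T z\<^sub>i, y\<^sub>i\<^sup>*\<rangle>\<close> in \<open>\<ell>\<^sub>q\<^sub>*\<close>; the strongly summing
estimate applied to \<open>x\<^sub>i = \<lambda>\<^sub>i z\<^sub>i\<close> is the majorizing one.\<close>

lemma Holder_sum:
  fixes u v :: "nat \<Rightarrow> real" and p r :: real
  assumes p: "p > 1" and r: "r > 1" and pr: "1/p + 1/r = 1"
    and u: "\<And>i. i < n \<Longrightarrow> u i \<ge> 0" and v: "\<And>i. i < n \<Longrightarrow> v i \<ge> 0"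
  shows "(\<Sum>i<n. u i * v i) \<le> (\<Sum>i<n. u i powr p) powr (1/p) * (\<Sum>i<n. v i powr r) powr (1/r)"
proof -
  define A where "A = (\<Sum>i<n. u i powr p) powr (1/p)"
  define B where "B = (\<Sum>i<n. v i powr r) powr (1/r)"
  have Ap: "A powr p = (\<Sum>i<n. u i powr p)"
    unfolding A_def using p by (simp add: powr_powr sum_nonneg)
  have Bp: "B powr r = (\<Sum>i<n. v i powr r)"
    unfolding B_def using r by (simp add: powr_powr sum_nonneg)
  show ?thesis
  proof (cases "A = 0 \<or> B = 0")
    case True
    then have "(\<forall>i<n. u i = 0) \<or> (\<forall>i<n. v i = 0)"
      using Ap Bp p r by (auto simp: sum_nonneg_eq_0_iff)
    then have "(\<Sum>i<n. u i * v i) = 0"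
      by auto
    with True show ?thesis
      by (auto simp: A_def [symmetric] B_def [symmetric])
  next
    case False
    then have A0: "A > 0" and B0: "B > 0"
      by (auto simp: A_def B_def order_less_le)
    have "(\<Sum>i<n. (u i / A) * (v i / B)) \<le> (\<Sum>i<n. (u i / A) powr p / p + (v i / B) powr r / r)"
      by (rule sum_mono, rule Youngs_inequality) (use p r pr u v A0 B0 in auto)
    also have "\<dots> = (\<Sum>i<n. u i powr p) / A powr p / p + (\<Sum>i<n. v i powr r) / B powr r / r"
      using u v A0 B0 by (simp add: sum.distrib powr_divide sum_divide_distrib)
    also have "\<dots> = 1"
      using A0 B0 pr by (simp flip: Ap Bp)
    finally have "(\<Sum>i<n. u i * v i) / (A * B) \<le> 1"
      by (simp add: sum_divide_distrib)
    then show ?thesis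
      using A0 B0 by (simp add: A_def B_def divide_le_eq)
  qed
qed

lemma conj_exp_cases [consumes 1]:
  assumes "1 \<le> q"
  obtains "q = 1" "conj_exp q = \<infinity>"
    | "q = \<infinity>" "conj_exp q = 1"
    | x where "q = ereal x" "x > 1" "conj_exp q = ereal (x / (x - 1))"
proof (cases q)
  case (real x)
  then show ?thesis
    using assms that by (cases "x = 1") (auto simp: conj_exp_def)
qed (use assms that in \<open>auto simp: conj_exp_def\<close>)

lemma one_le_conj_exp: "1 \<le> q \<Longrightarrow> 1 \<le> conj_exp q"
  by (erule conj_exp_cases) (auto simp: field_simps)

lemma seq_norm_infinity: "seq_norm \<infinity> n a = Max (insert 0 ((\<lambda>i. \<bar>a i\<bar>) ` {..<n}))"
  by (simp add: seq_norm_def)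

lemma seq_norm_ereal: "seq_norm (ereal x) n a = (\<Sum>i<n. \<bar>a i\<bar> powr x) powr (1 / x)"
  by (simp add: seq_norm_def)

lemma seq_norm_one: "seq_norm 1 n a = (\<Sum>i<n. \<bar>a i\<bar>)"
  using seq_norm_ereal [of 1 n a] by (simp add: one_ereal_def sum_nonneg)

lemma seq_norm_nonneg: "0 \<le> seq_norm r n a"
  by (simp add: seq_norm_def)

lemma abs_le_seq_norm_infinity: "i < n \<Longrightarrow> \<bar>a i\<bar> \<le> seq_norm \<infinity> n a"
  by (simp add: seq_norm_infinity)

lemma seq_norm_zero: "1 \<le> q \<Longrightarrow> seq_norm q n (\<lambda>i. 0) = 0"
  by (cases q) (auto simp: seq_norm_def image_constant_conv)

lemma seq_norm_mono:
  assumes "1 \<le> r" and st: "\<And>i. i < n \<Longrightarrow> \<bar>s i\<bar> \<le> \<bar>t i\<bar>"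
  shows "seq_norm r n s \<le> seq_norm r n t"
proof (cases r)
  case (real x)
  with assms have x: "x \<ge> 1" by simp
  have "(\<Sum>i<n. \<bar>s i\<bar> powr x) \<le> (\<Sum>i<n. \<bar>t i\<bar> powr x)"
    by (rule sum_mono, rule powr_mono2) (use x st in auto)
  then show ?thesis
    unfolding real seq_norm_ereal using x by (intro powr_mono2) (auto simp: sum_nonneg)
next
  case PInf
  show ?thesis
    unfolding PInf seq_norm_infinity
    by (rule Max.boundedI)
      (auto intro: order.trans [OF st] simp: seq_norm_infinity [symmetric]
        abs_le_seq_norm_infinity seq_norm_nonneg)
qed (use assms in simp)

lemma seq_norm_Holder:
  assumes q: "1 \<le> q" and s: "\<And>i. i < n \<Longrightarrow> 0 \<le> s i"
  shows "(\<Sum>i<n. s i * \<bar>a i\<bar>) \<le> seq_norm q n s * seq_norm (conj_exp q) n a"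
  using q
proof (cases rule: conj_exp_cases)
  case 1
  have "(\<Sum>i<n. s i * \<bar>a i\<bar>) \<le> (\<Sum>i<n. s i * seq_norm \<infinity> n a)"
    by (rule sum_mono, rule mult_left_mono) (auto simp: s abs_le_seq_norm_infinity)
  also have "\<dots> = seq_norm q n s * seq_norm (conj_exp q) n a"
    using 1 s by (simp add: seq_norm_one sum_distrib_right)
  finally show ?thesis .
next
  case 2
  have "(\<Sum>i<n. s i * \<bar>a i\<bar>) \<le> (\<Sum>i<n. seq_norm \<infinity> n s * \<bar>a i\<bar>)"
    by (rule sum_mono, rule mult_right_mono) (use abs_le_seq_norm_infinity [of _ n s] s in force)+
  also have "\<dots> = seq_norm q n s * seq_norm (conj_exp q) n a"
    using 2 by (simp add: seq_norm_one sum_distrib_left)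
  finally show ?thesis .
next
  case (3 x)
  have "(\<Sum>i<n. s i * \<bar>a i\<bar>)
      \<le> (\<Sum>i<n. s i powr x) powr (1/x) * (\<Sum>i<n. \<bar>a i\<bar> powr (x/(x-1))) powr (1/(x/(x-1)))"
    by (rule Holder_sum) (use 3 s in \<open>auto simp: field_simps\<close>)
  also have "\<dots> = seq_norm q n s * seq_norm (conj_exp q) n a"
    using 3 s by (simp add: seq_norm_ereal)
  finally show ?thesis .
qed

text \<open>The equality case of Hoelder's inequality: the \<open>\<ell>\<^sub>q\<^sub>*\<close>-norm is attained on the
positive part of the unit ball of \<open>\<ell>\<^sub>q\<close>. For \<open>1 < q < \<infinity>\<close> the norming sequence is
\<open>\<lambda>\<^sub>i = (\<bar>a\<^sub>i\<bar> / \<parallel>a\<parallel>\<^sub>q\<^sub>*)\<^bsup>q\<^sub>* - 1\<^esup>\<close>.\<close>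

lemma seq_norm_conj_exp_norming:
  assumes q: "1 \<le> q"
  obtains l where "\<forall>i. 0 \<le> l i" "seq_norm q n l \<le> 1"
    "seq_norm (conj_exp q) n a \<le> (\<Sum>i<n. l i * \<bar>a i\<bar>)"
  using q
proof (cases rule: conj_exp_cases)
  case 1
  show ?thesis
  proof (cases "seq_norm \<infinity> n a = 0")
    case True
    then show ?thesis
      using 1 that [of "\<lambda>i. 0"] by (simp add: seq_norm_one)
  next
    case False
    have "seq_norm \<infinity> n a \<in> insert 0 ((\<lambda>i. \<bar>a i\<bar>) ` {..<n})"
      unfolding seq_norm_infinity by (rule Max_in) auto
    with False obtain k where k: "k < n" "seq_norm \<infinity> n a = \<bar>a k\<bar>"
      by auto
    have "(\<Sum>i<n. (if i = k then 1 else 0) * \<bar>a i\<bar>) = \<bar>a k\<bar>"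
         "(\<Sum>i<n. \<bar>if i = k then 1 else 0::real\<bar>) = 1"
      using k by (simp_all add: if_distrib [of "\<lambda>c. c * _"] sum.delta' cong: if_cong)
    then show ?thesis
      using 1 k that [of "\<lambda>i. if i = k then 1 else 0"] by (simp add: seq_norm_one)
  qed
next
  case 2
  have "seq_norm \<infinity> n (\<lambda>i. 1) \<le> 1"
    unfolding seq_norm_infinity by (rule Max.boundedI) auto
  then show ?thesis
    using 2 that [of "\<lambda>i. 1"] by (simp add: seq_norm_one)
next
  case (3 x)
  define r where "r = x / (x - 1)"
  have r1: "r > 1" and rx: "(r - 1) * x = r"
    using 3 by (simp_all add: r_def field_simps)
  define S where "S = seq_norm (ereal r) n a"
  have Sr: "S powr r = (\<Sum>i<n. \<bar>a i\<bar> powr r)"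
    unfolding S_def seq_norm_ereal using r1 by (simp add: powr_powr sum_nonneg)
  show ?thesis
  proof (cases "S = 0")
    case True
    then show ?thesis
      using 3 q that [of "\<lambda>i. 0"] by (simp add: S_def r_def seq_norm_zero)
  next
    case False
    then have S0: "S > 0"
      using seq_norm_nonneg [of "ereal r" n a] by (simp add: S_def)
    define l where "l i = \<bar>a i\<bar> powr (r - 1) / S powr (r - 1)" for i
    have "\<bar>a i\<bar> powr (r - 1) * \<bar>a i\<bar> = \<bar>a i\<bar> powr r" for i
      by (cases "a i = 0") (use r1 in \<open>auto simp: powr_diff\<close>)
    then have "(\<Sum>i<n. l i * \<bar>a i\<bar>) = S powr r / S powr (r - 1)"
      by (simp add: l_def Sr sum_divide_distrib)
    also have "\<dots> = S"
      using S0 by (simp add: powr_diff)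
    finally have norming: "(\<Sum>i<n. l i * \<bar>a i\<bar>) = S" .
    have "\<bar>l i\<bar> powr x = \<bar>a i\<bar> powr r / S powr r" for i
      using S0 by (simp add: l_def powr_divide powr_powr rx)
    then have "(\<Sum>i<n. \<bar>l i\<bar> powr x) = 1"
      using S0 by (simp add: Sr [symmetric] sum_divide_distrib [symmetric])
    then have "seq_norm q n l = 1"
      using 3 by (simp add: seq_norm_ereal)
    with norming 3 show ?thesis
      using that [of l] by (simp add: S_def r_def l_def)
  qed
qed

lemma weak_norm_nonneg:
  assumes p: "1 \<le> p"
  shows "0 \<le> weak_norm p n ys"
proof -
  have "seq_norm (conj_exp p) n (\<lambda>i. ys i y) \<le> seq_norm (conj_exp p) n (\<lambda>i. norm (ys i))"
    if "norm y \<le> 1" for y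
  proof (rule seq_norm_mono [OF one_le_conj_exp [OF p]])
    fix i
    have "\<bar>ys i y\<bar> \<le> norm (ys i) * norm y"
      using norm_blinfun [of "ys i" y] by simp
    also have "\<dots> \<le> norm (ys i)"
      using that by (simp add: mult_left_le)
    finally show "\<bar>ys i y\<bar> \<le> \<bar>norm (ys i)\<bar>"
      by simp
  qed
  then have "bdd_above ((\<lambda>y. seq_norm (conj_exp p) n (\<lambda>i. ys i y)) ` {y. norm y \<le> 1})"
    by (intro bdd_aboveI2) auto
  then have "seq_norm (conj_exp p) n (\<lambda>i. ys i 0) \<le> weak_norm p n ys"
    unfolding weak_norm_def by (intro cSUP_upper) auto
  then show ?thesis
    using seq_norm_nonneg order.trans by blast
qed

lemma pos_majorizing_imp_pos_strongly_summing:
  assumes q: "1 \<le> q" and T: "linear T" and "pos_majorizing p q T"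
  shows "pos_strongly_summing p q T"
proof -
  obtain C where C: "C > 0" and majorizing: "\<And>n z ys. (\<forall>i<n. norm (z i) \<le> 1) \<Longrightarrow>
      (\<forall>i<n. positive_functional (ys i)) \<Longrightarrow>
      seq_norm (conj_exp q) n (\<lambda>i. ys i (T (z i))) \<le> C * weak_norm p n ys"
    using assms(3) unfolding pos_majorizing_def by blast
  have "(\<Sum>i<n. \<bar>ys i (T (x i))\<bar>) \<le> C * seq_norm q n (\<lambda>i. norm (x i)) * weak_norm p n ys"
    if pos: "\<forall>i<n. positive_functional (ys i)" for n x ys
  proof -
    define z where "z i = (1 / norm (x i)) *\<^sub>R x i" for i
    have x_eq: "x i = norm (x i) *\<^sub>R z i" for i
      by (cases "x i = 0") (simp_all add: z_def)
    have "\<bar>ys i (T (x i))\<bar> = norm (x i) * \<bar>ys i (T (z i))\<bar>" for i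
      by (subst x_eq) (simp add: linear_scale [OF T] blinfun.scaleR_right abs_mult)
    then have "(\<Sum>i<n. \<bar>ys i (T (x i))\<bar>) = (\<Sum>i<n. norm (x i) * \<bar>ys i (T (z i))\<bar>)"
      by simp
    also have "\<dots> \<le> seq_norm q n (\<lambda>i. norm (x i)) * seq_norm (conj_exp q) n (\<lambda>i. ys i (T (z i)))"
      by (rule seq_norm_Holder [OF q]) simp
    also have "\<dots> \<le> seq_norm q n (\<lambda>i. norm (x i)) * (C * weak_norm p n ys)"
      by (rule mult_left_mono [OF majorizing seq_norm_nonneg]) (use pos in \<open>simp_all add: z_def\<close>)
    finally show ?thesis
      by (simp add: ac_simps)
  qed
  with C show ?thesis
    unfolding pos_strongly_summing_def by blast
qed

lemma pos_strongly_summing_imp_pos_majorizing: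
  assumes q: "1 \<le> q" and p: "1 \<le> p" and T: "linear T" and "pos_strongly_summing p q T"
  shows "pos_majorizing p q T"
proof -
  obtain C where C: "C > 0" and summing: "\<And>n x ys. (\<forall>i<n. positive_functional (ys i)) \<Longrightarrow>
      (\<Sum>i<n. \<bar>ys i (T (x i))\<bar>) \<le> C * seq_norm q n (\<lambda>i. norm (x i)) * weak_norm p n ys"
    using assms(4) unfolding pos_strongly_summing_def by blast
  have "seq_norm (conj_exp q) n (\<lambda>i. ys i (T (z i))) \<le> C * weak_norm p n ys"
    if z: "\<forall>i<n. norm (z i) \<le> 1" and pos: "\<forall>i<n. positive_functional (ys i)" for n z ys
  proof -
    obtain l where l0: "\<forall>i. 0 \<le> l i" and l1: "seq_norm q n l \<le> 1"
      and norming: "seq_norm (conj_exp q) n (\<lambda>i. ys i (T (z i))) \<le> (\<Sum>i<n. l i * \<bar>ys i (T (z i))\<bar>)"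
      using seq_norm_conj_exp_norming [OF q] by blast
    define x where "x i = l i *\<^sub>R z i" for i
    have "\<bar>ys i (T (x i))\<bar> = l i * \<bar>ys i (T (z i))\<bar>" for i
      using l0 T by (simp add: x_def linear_scale blinfun.scaleR_right abs_mult)
    then have "seq_norm (conj_exp q) n (\<lambda>i. ys i (T (z i))) \<le> (\<Sum>i<n. \<bar>ys i (T (x i))\<bar>)"
      using norming by simp
    also have "\<dots> \<le> C * seq_norm q n (\<lambda>i. norm (x i)) * weak_norm p n ys"
      by (rule summing [OF pos])
    also have "\<dots> \<le> C * seq_norm q n l * weak_norm p n ys"
      using C weak_norm_nonneg [OF p] z l0
      by (intro mult_right_mono mult_left_mono seq_norm_mono [OF q])
        (auto simp: x_def mult_left_le)
    also have "\<dots> \<le> C * weak_norm p n ys"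
      using C l1 weak_norm_nonneg [OF p, of n ys] seq_norm_nonneg [of q n l]
      by (simp add: mult_left_le_one_le)
    finally show ?thesis .
  qed
  with C show ?thesis
    unfolding pos_majorizing_def by blast
qed

theorem theorem3p5:
  fixes p q :: ereal and T :: "'a::banach \<Rightarrow> 'b::banach_lattice"
  assumes "1 \<le> q" and "q \<le> p" and "bounded_linear T"
  shows "pos_majorizing p q T \<longleftrightarrow> pos_strongly_summing p q T"
proof -
  have "1 \<le> p" and "linear T"
    using assms by (simp_all add: bounded_linear.linear)
  then show ?thesis
    using assms(1) pos_majorizing_imp_pos_strongly_summing
      pos_strongly_summing_imp_pos_majorizing by blast
qed

end
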